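(* Let $k\ge2$ and $1\le n\le \ell$. Then $D_k(\ell)\le D_k(n)\,k^{\ell-n}$.
   Context: Labeled chip-firing on the infinite rooted directed $k$-ary tree (each vertex has $k$ children ordered left to right, root on layer $1$): a vertex with at least $k$ chips may fire by choosing any $k$ of its chips and sending the $i$-th smallest label among them to its $i$-th leftmost child; a configuration is stable when no vertex has $\ge k$ chips. Starting with $k^\ell$ chips labeled $1,\dots,k^\ell$ at the root, every stable configuration has exactly one chip on each vertex of layer $\ell+1$ and none elsewhere, and is identified with the permutation of labels read left to right on layer $\ell+1$. $D_k(\ell)$ denotes the maximum, over all reachable stable configurations, of the length of the longest strictly decreasing subsequence of the corresponding permutation. *)

theory Defs
  imports Main "HOL-Library.Sublist"
begin

text \<open>Vertices of the infinite rooted k-ary tree are finite lists of child indices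
  (each entry < k); the root is the empty list and lies on layer 1, so a vertex v lies
  on layer (length v + 1). The i-th leftmost child (0-based) of v is v @ [i].
  A labelled configuration assigns to each vertex the finite set of labels of the
  chips sitting there (labels are distinct).\<close>

type_synonym vertex = "nat list"
type_synonym config = "vertex \<Rightarrow> nat set"

definition fire_step :: "nat \<Rightarrow> config \<Rightarrow> config \<Rightarrow> bool" where
  "fire_step k c c' \<longleftrightarrow>
     (\<exists>v A. A \<subseteq> c v \<and> card A = k \<and>
        c' = (\<lambda>w. if w = v then c v - A
                  else if w \<noteq> [] \<and> butlast w = v \<and> last w < k
                       then insert (sorted_list_of_set A ! last w) (c w)
                  else c w))"

definition init_config :: "nat \<Rightarrow> nat \<Rightarrow> config" where
  "init_config k l = (\<lambda>v. if v = [] then {1..k ^ l} else {})"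

definition reachable :: "nat \<Rightarrow> nat \<Rightarrow> config \<Rightarrow> bool" where
  "reachable k l c \<longleftrightarrow> (fire_step k)\<^sup>*\<^sup>* (init_config k l) c"

definition stable :: "nat \<Rightarrow> config \<Rightarrow> bool" where
  "stable k c \<longleftrightarrow> (\<forall>v. card (c v) < k)"

text \<open>All vertices with n entries (i.e. on layer n+1), listed left to right.\<close>
fun layer_words :: "nat \<Rightarrow> nat \<Rightarrow> vertex list" where
  "layer_words k 0 = [[]]"
| "layer_words k (Suc n) = concat (map (\<lambda>i. map (\<lambda>w. i # w) (layer_words k n)) [0..<k])"

text \<open>The permutation of a stable configuration: labels read left to right on layer l+1
  (each such vertex carries exactly one chip).\<close>
definition config_perm :: "nat \<Rightarrow> nat \<Rightarrow> config \<Rightarrow> nat list" where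
  "config_perm k l c = map (\<lambda>w. the_elem (c w)) (layer_words k l)"

definition longest_decr :: "nat list \<Rightarrow> nat" where
  "longest_decr xs = Max {length ys | ys. subseq ys xs \<and> sorted_wrt (>) ys}"

definition D :: "nat \<Rightarrow> nat \<Rightarrow> nat" where
  "D k l = Max {longest_decr (config_perm k l c) | c. reachable k l c \<and> stable k c}"

end

theory Submission
  imports Defs
begin

text \<open>With \<open>k ^ (m + 1)\<close> chips, the root of a stable configuration has fired exactly
  \<open>k ^ m\<close> times, and by induction over the firing sequence each of the \<open>k\<close> child subtrees
  has run an independent chip-firing process started from its own \<open>k ^ m\<close> chips at its root.
  Renaming these chips order-preservingly to \<open>1, \<dots>, k ^ m\<close> therefore turns every subtree
  into a reachable stable configuration for \<open>m\<close>. The permutation of the whole configuration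
  is the concatenation of the \<open>k\<close> subtree permutations; a decreasing subsequence of a
  concatenation splits into decreasing subsequences of the pieces, and an order-preserving
  renaming keeps decreasing subsequences decreasing. Hence \<open>D k (m + 1) \<le> k * D k m\<close>, which
  iterates to the claim. Since \<open>D\<close> is a maximum, this also needs a reachable stable
  configuration for every \<open>m\<close>: fire the root \<open>k ^ m\<close> times, then stabilise the subtrees one
  after another.\<close>

section \<open>Longest decreasing subsequences\<close>

lemma finite_decreasing_subseq_lengths:
  "finite {length ys | ys. subseq ys xs \<and> sorted_wrt (>) ys}"
  by (rule finite_subset[of _ "{..length xs}"]) (auto dest: list_emb_length)

lemma longest_decr_ge:
  "subseq ys xs \<Longrightarrow> sorted_wrt (>) ys \<Longrightarrow> length ys \<le> longest_decr xs"
  unfolding longest_decr_def by (rule Max_ge[OF finite_decreasing_subseq_lengths]) blast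

lemma longest_decr_witness:
  obtains ys where "subseq ys xs" "sorted_wrt (>) ys" "length ys = longest_decr xs"
proof -
  have "{length ys | ys. subseq ys xs \<and> sorted_wrt (>) ys} \<noteq> {}"
    by (auto intro!: exI[of _ "[]"])
  from Max_in[OF finite_decreasing_subseq_lengths this] show thesis
    using that unfolding longest_decr_def by auto
qed

lemma longest_decr_le_length: "longest_decr xs \<le> length xs"
  by (metis longest_decr_witness list_emb_length)

lemma longest_decr_append:
  "longest_decr (xs @ ys) \<le> longest_decr xs + longest_decr ys"
proof -
  obtain zs where zs: "subseq zs (xs @ ys)" "sorted_wrt (>) zs" "length zs = longest_decr (xs @ ys)"
    by (rule longest_decr_witness)
  then obtain zs1 zs2 where "zs = zs1 @ zs2" "subseq zs1 xs" "subseq zs2 ys"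
    by (auto elim: subseq_appendE)
  with zs show ?thesis
    by (metis add_mono length_append longest_decr_ge sorted_wrt_append)
qed

lemma longest_decr_concat:
  "longest_decr (concat xss) \<le> sum_list (map longest_decr xss)"
proof (induction xss)
  case Nil
  then show ?case using longest_decr_le_length[of "[]"] by simp
next
  case (Cons xs xss)
  then show ?case using longest_decr_append[of xs "concat xss"] by simp
qed

lemma longest_decr_le_map:
  assumes "strict_mono_on (set xs) g"
  shows "longest_decr xs \<le> longest_decr (map g xs)"
proof -
  obtain ys where ys: "subseq ys xs" "sorted_wrt (>) ys" "length ys = longest_decr xs"
    by (rule longest_decr_witness)
  have "set ys \<subseteq> set xs"
    using ys(1) by (auto elim: list_emb_set)
  with ys(2) have "sorted_wrt (>) (map g ys)"
    by (auto simp: sorted_wrt_map elim!: sorted_wrt_mono_rel[rotated]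
             intro: strict_mono_onD[OF assms])
  with ys show ?thesis
    by (metis length_map longest_decr_ge subseq_map)
qed

section \<open>Firing moves\<close>

lemma sorted_list_of_set_nth_mem: "card A = k \<Longrightarrow> i < k \<Longrightarrow> sorted_list_of_set A ! i \<in> A"
  by (metis card_ge_0_finite gr0I less_zeroE length_sorted_list_of_set nth_mem
            set_sorted_list_of_set)

lemma sorted_list_of_set_image_strict_mono_on:
  assumes "strict_mono_on A g" "finite A"
  shows "sorted_list_of_set (g ` A) = map g (sorted_list_of_set A)"
proof (rule strict_sorted_equal)
  have "sorted_wrt (<) (sorted_list_of_set A)"
    by simp
  then show "sorted_wrt (<) (map g (sorted_list_of_set A))"
    unfolding sorted_wrt_map
    by (rule sorted_wrt_mono_rel[rotated]) (use assms in \<open>auto intro: strict_mono_onD\<close>)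
  show "sorted_wrt (<) (sorted_list_of_set (g ` A))"
    by simp
  show "set (sorted_list_of_set (g ` A)) = set (map g (sorted_list_of_set A))"
    using assms(2) by simp
qed

definition fire :: "nat \<Rightarrow> vertex \<Rightarrow> nat set \<Rightarrow> config \<Rightarrow> config" where
  "fire k v A c = (\<lambda>w. if w = v then c v - A
                       else if w \<noteq> [] \<and> butlast w = v \<and> last w < k
                            then insert (sorted_list_of_set A ! last w) (c w)
                       else c w)"

lemma fire_step_iff: "fire_step k c c' \<longleftrightarrow> (\<exists>v A. A \<subseteq> c v \<and> card A = k \<and> c' = fire k v A c)"
  unfolding fire_step_def fire_def ..

lemma fire_stepE:
  assumes "fire_step k c c'"
  obtains v A where "A \<subseteq> c v" "card A = k" "c' = fire k v A c"
  using assms unfolding fire_step_iff by blast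

lemma fire_self: "fire k v A c v = c v - A"
  unfolding fire_def by simp

lemma fire_child:
  "i < k \<Longrightarrow> fire k v A c (v @ [i]) = insert (sorted_list_of_set A ! i) (c (v @ [i]))"
  unfolding fire_def by simp

lemma fire_Cons_root: "fire k (i # v) A c [] = c []"
  unfolding fire_def by simp

lemma fire_subset: "card A = k \<Longrightarrow> fire k v A c w \<subseteq> A \<union> c w"
  using sorted_list_of_set_nth_mem[of A k] unfolding fire_def by auto

definition labels :: "config \<Rightarrow> nat set" where
  "labels c = (\<Union>w. c w)"

lemma labels_fire:
  assumes "A \<subseteq> c v" "card A = k" "0 < k"
  shows "labels (fire k v A c) = labels c"
proof
  show "labels (fire k v A c) \<subseteq> labels c"
    using fire_subset[OF assms(2), of v c] assms(1) unfolding labels_def by blast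
next
  have "finite A"
    using assms(2,3) card_ge_0_finite by blast
  show "labels c \<subseteq> labels (fire k v A c)"
  proof
    fix x assume "x \<in> labels c"
    then obtain w where x: "x \<in> c w"
      unfolding labels_def by blast
    show "x \<in> labels (fire k v A c)"
    proof (cases "w = v \<and> x \<in> A")
      case True
      with \<open>finite A\<close> obtain i where "i < k" "sorted_list_of_set A ! i = x"
        by (metis assms(2) in_set_conv_nth length_sorted_list_of_set set_sorted_list_of_set)
      then have "x \<in> fire k v A c (v @ [i])"
        by (simp add: fire_child)
      then show ?thesis
        unfolding labels_def by blast
    next
      case False
      with x have "x \<in> fire k v A c w"
        unfolding fire_def by auto
      then show ?thesis
        unfolding labels_def by blast
    qed
  qed
qed

lemma labels_fire_step: "0 < k \<Longrightarrow> fire_step k c c' \<Longrightarrow> labels c' = labels c"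
  by (auto elim!: fire_stepE simp: labels_fire)

lemma labels_fire_steps:
  assumes "0 < k" "(fire_step k)\<^sup>*\<^sup>* c c'"
  shows "labels c' = labels c"
  using assms(2) by (induction rule: rtranclp_induct) (simp_all add: labels_fire_step[OF assms(1)])

definition at_root :: "nat set \<Rightarrow> config" where
  "at_root R = (\<lambda>v. if v = [] then R else {})"

definition subtree :: "nat \<Rightarrow> config \<Rightarrow> config" where
  "subtree j c = (\<lambda>w. c (j # w))"

definition add_to_root :: "nat \<Rightarrow> config \<Rightarrow> config" where
  "add_to_root a c = c([] := insert a (c []))"

definition relabel :: "(nat \<Rightarrow> nat) \<Rightarrow> config \<Rightarrow> config" where
  "relabel g c = (\<lambda>w. g ` c w)"

definition graft :: "nat \<Rightarrow> config \<Rightarrow> config \<Rightarrow> config" where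
  "graft j d c = (\<lambda>w. case w of [] \<Rightarrow> c [] | i # w' \<Rightarrow> if i = j then d w' else c w)"

lemma at_root_simps [simp]: "at_root R [] = R" "at_root R (j # w) = {}"
  unfolding at_root_def by simp_all

lemma labels_at_root [simp]: "labels (at_root R) = R"
  unfolding labels_def at_root_def by auto

lemma labels_subtree: "labels (subtree j c) \<subseteq> labels c"
  unfolding labels_def subtree_def by auto

lemma labels_add_to_root: "labels (add_to_root a c) = insert a (labels c)"
  unfolding labels_def add_to_root_def by auto metis

lemma add_to_root_at_root: "add_to_root a (at_root R) = at_root (insert a R)"
  unfolding add_to_root_def at_root_def by (auto simp: fun_eq_iff)

lemma relabel_at_root: "relabel g (at_root R) = at_root (g ` R)"
  unfolding relabel_def at_root_def by (auto simp: fun_eq_iff)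

lemma add_to_root_fire:
  "a \<notin> A \<Longrightarrow> add_to_root a (fire k v A c) = fire k v A (add_to_root a c)"
  unfolding add_to_root_def fire_def by (auto simp: fun_eq_iff)

lemma relabel_fire:
  assumes "strict_mono_on (c v) g" "A \<subseteq> c v" "card A = k" "0 < k"
  shows "relabel g (fire k v A c) = fire k v (g ` A) (relabel g c)"
proof -
  have "inj_on g (c v)"
    using assms(1) by (rule strict_mono_on_imp_inj_on)
  moreover have "finite A"
    using assms(3,4) card_ge_0_finite by blast
  moreover have "strict_mono_on A g"
    using monotone_on_subset[of "c v" "(<)" "(<)" g A] assms(1,2) .
  ultimately show ?thesis
    using assms(2,3)
    by (auto simp: fun_eq_iff relabel_def fire_def inj_on_image_set_diff
                   sorted_list_of_set_image_strict_mono_on)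
qed

lemma graft_fire: "graft j (fire k v A d) c = fire k (j # v) A (graft j d c)"
  unfolding graft_def fire_def by (auto simp: fun_eq_iff split: list.splits)

lemma subtree_fire_root:
  "j < k \<Longrightarrow> subtree j (fire k [] A c) = add_to_root (sorted_list_of_set A ! j) (subtree j c)"
  unfolding subtree_def add_to_root_def fire_def by (auto simp: fun_eq_iff)

lemma subtree_fire_Cons: "subtree j (fire k (j # v) A c) = fire k v A (subtree j c)"
  unfolding subtree_def fire_def by (auto simp: fun_eq_iff)

lemma subtree_fire_Cons_other: "i \<noteq> j \<Longrightarrow> subtree j (fire k (i # v) A c) = subtree j c"
  unfolding subtree_def fire_def by (auto simp: fun_eq_iff)

lemma graft_subtree_self: "graft j (subtree j c) c = c"
  unfolding graft_def subtree_def by (auto simp: fun_eq_iff split: list.splits)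

lemma rtranclp_map_invariant:
  assumes "r\<^sup>*\<^sup>* x y" "P x"
    and "\<And>x y. r x y \<Longrightarrow> P x \<Longrightarrow> P y"
    and "\<And>x y. r x y \<Longrightarrow> P x \<Longrightarrow> s (F x) (F y)"
  shows "s\<^sup>*\<^sup>* (F x) (F y)"
proof -
  from assms(1) have "P y \<and> s\<^sup>*\<^sup>* (F x) (F y)"
    by (induction rule: rtranclp_induct)
       (use assms(2-4) in \<open>auto intro: rtranclp.rtrancl_into_rtrancl\<close>)
  then show ?thesis ..
qed

lemma fire_step_add_to_root:
  assumes "fire_step k c c'" "a \<notin> labels c"
  shows "fire_step k (add_to_root a c) (add_to_root a c')"
proof -
  obtain v A where A: "A \<subseteq> c v" "card A = k" "c' = fire k v A c"
    using assms(1) by (rule fire_stepE)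
  have "a \<notin> A"
    using A(1) assms(2) unfolding labels_def by blast
  show ?thesis
    unfolding fire_step_iff
  proof (intro exI conjI)
    show "A \<subseteq> add_to_root a c v"
      using A(1) by (auto simp: add_to_root_def)
    show "add_to_root a c' = fire k v A (add_to_root a c)"
      using add_to_root_fire[OF \<open>a \<notin> A\<close>] A(3) by simp
  qed (rule A(2))
qed

lemma fire_steps_add_to_root:
  assumes "0 < k" "(fire_step k)\<^sup>*\<^sup>* c c'" "a \<notin> labels c"
  shows "(fire_step k)\<^sup>*\<^sup>* (add_to_root a c) (add_to_root a c')"
  using assms(2,3)
  by (rule rtranclp_map_invariant[where P = "\<lambda>d. a \<notin> labels d" and F = "add_to_root a"])
     (simp_all add: fire_step_add_to_root labels_fire_step[OF assms(1)])

lemma fire_step_relabel: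
  assumes "fire_step k c c'" "strict_mono_on (labels c) g" "0 < k"
  shows "fire_step k (relabel g c) (relabel g c')"
proof -
  obtain v A where A: "A \<subseteq> c v" "card A = k" "c' = fire k v A c"
    using assms(1) by (rule fire_stepE)
  have mono: "strict_mono_on (c v) g"
    using monotone_on_subset[of "labels c" "(<)" "(<)" g "c v"] assms(2)
    by (auto simp: labels_def)
  show ?thesis
    unfolding fire_step_iff
  proof (intro exI conjI)
    show "g ` A \<subseteq> relabel g c v"
      using A(1) by (auto simp: relabel_def)
    show "card (g ` A) = k"
      using A(1,2) inj_on_subset[OF strict_mono_on_imp_inj_on[OF mono]] by (simp add: card_image)
    show "relabel g c' = fire k v (g ` A) (relabel g c)"
      using relabel_fire[of c v g A k, OF mono A(1,2) assms(3)] A(3) by simp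
  qed
qed

lemma fire_steps_relabel:
  assumes "0 < k" "(fire_step k)\<^sup>*\<^sup>* c c'" "strict_mono_on (labels c) g"
  shows "(fire_step k)\<^sup>*\<^sup>* (relabel g c) (relabel g c')"
  using assms(2,3)
  by (rule rtranclp_map_invariant[where P = "\<lambda>d. strict_mono_on (labels d) g" and F = "relabel g"])
     (simp_all add: fire_step_relabel assms(1) labels_fire_step[OF assms(1)])

lemma fire_step_graft:
  assumes "fire_step k d d'"
  shows "fire_step k (graft j d c) (graft j d' c)"
proof -
  obtain v A where A: "A \<subseteq> d v" "card A = k" "d' = fire k v A d"
    using assms by (rule fire_stepE)
  moreover have "graft j d c (j # v) = d v"
    by (simp add: graft_def)
  ultimately show ?thesis
    unfolding fire_step_iff by (metis graft_fire)
qed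

lemma fire_steps_graft:
  "(fire_step k)\<^sup>*\<^sup>* d d' \<Longrightarrow> (fire_step k)\<^sup>*\<^sup>* (graft j d c) (graft j d' c)"
  by (induction rule: rtranclp_induct) (auto intro: rtranclp.rtrancl_into_rtrancl fire_step_graft)

section \<open>The subtrees of a reachable configuration\<close>

definition from_root :: "nat \<Rightarrow> nat \<Rightarrow> config \<Rightarrow> bool" where
  "from_root k f d \<longleftrightarrow> card (labels d) = f \<and> (fire_step k)\<^sup>*\<^sup>* (at_root (labels d)) d"

lemma from_root_add_to_root:
  assumes "0 < k" "from_root k f d" "finite (labels d)" "a \<notin> labels d"
  shows "from_root k (Suc f) (add_to_root a d)"
proof -
  have steps: "(fire_step k)\<^sup>*\<^sup>* (at_root (labels d)) d" and card: "card (labels d) = f"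
    using assms(2) unfolding from_root_def by auto
  have "(fire_step k)\<^sup>*\<^sup>* (add_to_root a (at_root (labels d))) (add_to_root a d)"
    using fire_steps_add_to_root[OF assms(1) steps] assms(4) by simp
  then show ?thesis
    using card assms(3,4) unfolding from_root_def by (simp add: labels_add_to_root add_to_root_at_root)
qed

lemma from_root_fire_step:
  assumes "0 < k" "from_root k f d" "fire_step k d d'"
  shows "from_root k f d'"
  using assms(2) labels_fire_step[OF assms(1,3)]
    rtranclp.rtrancl_into_rtrancl[where r = "fire_step k", OF _ assms(3)]
  unfolding from_root_def by simp

text \<open>After f firings of the root, each of the k subtrees has evolved as an independent
  chip-firing process started from its own f chips at its root.\<close>
definition root_fired :: "nat \<Rightarrow> nat set \<Rightarrow> nat \<Rightarrow> config \<Rightarrow> bool" where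
  "root_fired k R f c \<longleftrightarrow> card (c []) + k * f = card R \<and> (\<forall>w. w \<noteq> [] \<longrightarrow> c [] \<inter> c w = {}) \<and>
     (\<forall>j<k. from_root k f (subtree j c))"

lemma root_fired_at_root: "root_fired k R 0 (at_root R)"
proof -
  have "subtree j (at_root R) = at_root {}" for j
    unfolding subtree_def at_root_def by (auto simp: fun_eq_iff)
  then show ?thesis
    unfolding root_fired_def from_root_def by (auto simp: neq_Nil_conv)
qed

lemma root_fired_fire_root:
  assumes inv: "root_fired k R f c" and "labels c \<subseteq> R" "finite R"
    and A: "A \<subseteq> c []" "card A = k" and "0 < k"
  shows "root_fired k R (Suc f) (fire k [] A c)"
  unfolding root_fired_def
proof (intro conjI allI impI)
  have "c [] \<subseteq> R"
    using assms(2) unfolding labels_def by blast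
  then have fin: "finite (c [])"
    using assms(3) by (rule finite_subset)
  have "card (c [] - A) = card (c []) - k"
    using card_Diff_subset[OF finite_subset[OF A(1) fin] A(1)] A(2) by simp
  moreover have "k \<le> card (c [])"
    using card_mono[OF fin A(1)] A(2) by simp
  ultimately show "card (fire k [] A c []) + k * Suc f = card R"
    using inv unfolding root_fired_def fire_self by simp
next
  fix w :: vertex
  assume "w \<noteq> []"
  then have "c [] \<inter> c w = {}"
    using inv unfolding root_fired_def by blast
  then show "fire k [] A c [] \<inter> fire k [] A c w = {}"
    using fire_subset[OF A(2), of "[]" c w] unfolding fire_self by blast
next
  fix j
  assume "j < k"
  define a where "a = sorted_list_of_set A ! j"
  have "a \<in> c []"
    using A sorted_list_of_set_nth_mem[OF A(2) \<open>j < k\<close>] unfolding a_def by blast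
  moreover have "\<forall>w. c [] \<inter> c (j # w) = {}"
    using inv unfolding root_fired_def by blast
  ultimately have "a \<notin> labels (subtree j c)"
    unfolding labels_def subtree_def by blast
  moreover have "finite (labels (subtree j c))"
    using finite_subset[OF subset_trans[OF labels_subtree assms(2)] assms(3)] .
  moreover have "from_root k f (subtree j c)"
    using inv \<open>j < k\<close> unfolding root_fired_def by blast
  ultimately show "from_root k (Suc f) (subtree j (fire k [] A c))"
    unfolding subtree_fire_root[OF \<open>j < k\<close>] a_def[symmetric]
    using from_root_add_to_root[OF \<open>0 < k\<close>] by blast
qed

lemma root_fired_fire_Cons:
  assumes inv: "root_fired k R f c" and A: "A \<subseteq> c (i # v)" "card A = k" and "0 < k"
  shows "root_fired k R f (fire k (i # v) A c)"
  unfolding root_fired_def fire_Cons_root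
proof (intro conjI allI impI)
  show "card (c []) + k * f = card R"
    using inv unfolding root_fired_def by simp
next
  fix w :: vertex
  assume "w \<noteq> []"
  then have "c [] \<inter> c w = {}" "c [] \<inter> c (i # v) = {}"
    using inv unfolding root_fired_def by blast+
  then show "c [] \<inter> fire k (i # v) A c w = {}"
    using fire_subset[OF A(2), of "i # v" c w] A(1) by blast
next
  fix j
  assume "j < k"
  then have run: "from_root k f (subtree j c)"
    using inv unfolding root_fired_def by blast
  show "from_root k f (subtree j (fire k (i # v) A c))"
  proof (cases "j = i")
    case True
    have "fire_step k (subtree j c) (fire k v A (subtree j c))"
      unfolding fire_step_iff using A True by (auto simp: subtree_def)
    then show ?thesis
      using from_root_fire_step[OF \<open>0 < k\<close> run] True by (simp add: subtree_fire_Cons)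
  next
    case False
    then show ?thesis
      using run by (simp add: subtree_fire_Cons_other)
  qed
qed

lemma fire_steps_root_fired:
  assumes "0 < k" "finite R" "(fire_step k)\<^sup>*\<^sup>* (at_root R) c"
  shows "\<exists>f. root_fired k R f c"
  using assms(3)
proof (induction rule: rtranclp_induct)
  case base
  then show ?case
    using root_fired_at_root by blast
next
  case (step c c')
  then obtain f where inv: "root_fired k R f c"
    by blast
  have "labels c = R"
    using labels_fire_steps[OF assms(1) step(1)] by simp
  obtain v A where A: "A \<subseteq> c v" "card A = k" "c' = fire k v A c"
    using step(2) by (rule fire_stepE)
  show ?case
  proof (cases v)
    case Nil
    then show ?thesis
      using root_fired_fire_root[OF inv _ assms(2)] A \<open>labels c = R\<close> assms(1) by blast
  next
    case (Cons i v')
    then show ?thesis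
      using root_fired_fire_Cons[OF inv] A assms(1) by blast
  qed
qed

lemma init_config_eq_at_root: "init_config k l = at_root {1..k ^ l}"
  unfolding init_config_def at_root_def ..

lemma labels_reachable: "0 < k \<Longrightarrow> reachable k l c \<Longrightarrow> labels c = {1..k ^ l}"
  unfolding reachable_def init_config_eq_at_root by (simp add: labels_fire_steps)

lemma root_fired_stable:
  assumes "root_fired k R f c" "stable k c" "card R = k * q"
  shows "f = q"
proof -
  have less: "card (c []) < k" and eq: "card (c []) + k * f = k * q"
    using assms unfolding root_fired_def stable_def by auto
  then have "k * f \<le> k * q"
    by linarith
  then have "f \<le> q"
    using less by simp
  moreover have "k * q < k * Suc f"
    using less eq by simp
  then have "q < Suc f"
    by (metis mult_less_cancel1)
  ultimately show ?thesis
    by simp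
qed

definition rank :: "nat set \<Rightarrow> nat \<Rightarrow> nat" where
  "rank R x = card {y \<in> R. y \<le> x}"

lemma strict_mono_on_rank:
  assumes "finite R"
  shows "strict_mono_on R (rank R)"
proof (rule strict_mono_onI)
  fix r s
  assume "r \<in> R" "s \<in> R" "r < s"
  then have "{y \<in> R. y \<le> r} \<subseteq> {y \<in> R. y \<le> s}" "s \<in> {y \<in> R. y \<le> s} - {y \<in> R. y \<le> r}"
    by auto
  then have "{y \<in> R. y \<le> r} \<subset> {y \<in> R. y \<le> s}"
    by blast
  then show "rank R r < rank R s"
    unfolding rank_def using assms by (intro psubset_card_mono) auto
qed

lemma rank_image:
  assumes "finite R"
  shows "rank R ` R = {1..card R}"
proof (rule card_subset_eq)
  show "rank R ` R \<subseteq> {1..card R}"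
  proof
    fix z assume "z \<in> rank R ` R"
    then obtain x where "x \<in> R" "z = rank R x"
      by blast
    moreover have "{y \<in> R. y \<le> x} \<subseteq> R"
      by blast
    ultimately show "z \<in> {1..card R}"
      unfolding rank_def using assms
      by (auto simp: Suc_le_eq card_gt_0_iff intro: card_mono)
  qed
  show "card (rank R ` R) = card {1..card R}"
    using card_image[OF strict_mono_on_imp_inj_on[OF strict_mono_on_rank[OF assms]]] by simp
qed simp

lemma strict_mono_on_rank_subtree:
  "0 < k \<Longrightarrow> reachable k l c \<Longrightarrow> strict_mono_on (labels (subtree j c)) (rank (labels (subtree j c)))"
  using labels_subtree labels_reachable finite_subset
  by (metis finite_atLeastAtMost strict_mono_on_rank)

lemma card_relabel:
  assumes "strict_mono_on (labels c) g"
  shows "card (relabel g c w) = card (c w)"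
proof -
  have "inj_on g (c w)"
    using strict_mono_on_imp_inj_on[OF assms] by (rule inj_on_subset) (auto simp: labels_def)
  then show ?thesis
    unfolding relabel_def by (rule card_image)
qed

lemma reachable_relabel_subtree:
  assumes "0 < k" "reachable k (Suc m) c" "stable k c" "j < k"
  shows "reachable k m (relabel (rank (labels (subtree j c))) (subtree j c))"
proof -
  define S where "S = labels (subtree j c)"
  obtain f where inv: "root_fired k {1..k ^ Suc m} f c"
    using fire_steps_root_fired assms(1,2) unfolding reachable_def init_config_eq_at_root by blast
  then have "f = k ^ m"
    using root_fired_stable assms(3) by simp
  then have card: "card S = k ^ m"
    and steps: "(fire_step k)\<^sup>*\<^sup>* (at_root S) (subtree j c)"
    using inv assms(4) unfolding root_fired_def from_root_def S_def by auto
  have "finite S"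
    using card assms(1) by (intro card_ge_0_finite) simp
  have "(fire_step k)\<^sup>*\<^sup>* (relabel (rank S) (at_root S)) (relabel (rank S) (subtree j c))"
    using fire_steps_relabel[OF assms(1) steps] strict_mono_on_rank[OF \<open>finite S\<close>] by simp
  then show ?thesis
    unfolding reachable_def init_config_eq_at_root S_def[symmetric] relabel_at_root
    by (simp add: rank_image[OF \<open>finite S\<close>] card)
qed

lemma reachable_0:
  assumes "2 \<le> k" "reachable k 0 c"
  shows "c = at_root {1}"
proof -
  have "\<not> fire_step k (at_root {1}) c'" for c'
  proof
    assume "fire_step k (at_root {1}) c'"
    then obtain v A where "A \<subseteq> at_root {1} v" "card A = k"
      by (rule fire_stepE)
    moreover have "at_root {1} v \<subseteq> {1}"
      unfolding at_root_def by simp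
    ultimately have "k \<le> card {1::nat}"
      by (metis card_mono finite.emptyI finite_insert subset_trans)
    then show False
      using assms(1) by simp
  qed
  moreover have "(fire_step k)\<^sup>*\<^sup>* (at_root {1}) c"
    using assms(2) unfolding reachable_def init_config_eq_at_root by simp
  ultimately show ?thesis
    by (metis converse_rtranclpE)
qed

lemma reachable_stable_card_layer:
  assumes "2 \<le> k" "reachable k l c" "stable k c" "w \<in> set (layer_words k l)"
  shows "card (c w) = 1"
  using assms(2-4)
proof (induction l arbitrary: c w)
  case 0
  then show ?case
    using reachable_0[OF assms(1) 0(1)] by simp
next
  case (Suc m)
  then obtain j u where w: "w = j # u" "j < k" "u \<in> set (layer_words k m)"
    by auto
  define g where "g = rank (labels (subtree j c))"
  have mono: "strict_mono_on (labels (subtree j c)) g"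
    unfolding g_def using strict_mono_on_rank_subtree[OF _ Suc.prems(1)] assms(1) by simp
  have "reachable k m (relabel g (subtree j c))"
    unfolding g_def using reachable_relabel_subtree assms(1) Suc.prems w(2) by simp
  moreover have "stable k (relabel g (subtree j c))"
    using Suc.prems(2) unfolding stable_def card_relabel[OF mono] by (simp add: subtree_def)
  ultimately have "card (relabel g (subtree j c) u) = 1"
    using Suc.IH w(3) by blast
  then show ?case
    unfolding card_relabel[OF mono] w(1) by (simp add: subtree_def)
qed

section \<open>Existence of stable configurations\<close>

lemma fire_steps_subtrees:
  assumes "\<And>j. j < p \<Longrightarrow> (fire_step k)\<^sup>*\<^sup>* (subtree j c) (d j)"
  shows "(fire_step k)\<^sup>*\<^sup>* c (\<lambda>w. case w of [] \<Rightarrow> c [] | i # u \<Rightarrow> if i < p then d i u else c w)"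
  using assms
proof (induction p)
  case 0
  have "(\<lambda>w. case w of [] \<Rightarrow> c [] | i # u \<Rightarrow> if i < 0 then d i u else c w) = c"
    by (simp add: fun_eq_iff split: list.split)
  then show ?case
    by simp
next
  case (Suc p)
  define c' where "c' = (\<lambda>w. case w of [] \<Rightarrow> c [] | i # u \<Rightarrow> if i < p then d i u else c w)"
  have "subtree p c' = subtree p c"
    unfolding c'_def subtree_def by simp
  then have "(fire_step k)\<^sup>*\<^sup>* c' (graft p (d p) c')"
    using fire_steps_graft[OF Suc.prems[of p], of p c'] graft_subtree_self[of p c'] by simp
  moreover have "graft p (d p) c' = (\<lambda>w. case w of [] \<Rightarrow> c [] | i # u \<Rightarrow> if i < Suc p then d i u else c w)"
    unfolding graft_def c'_def by (auto simp: fun_eq_iff split: list.splits)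
  ultimately show ?case
    using Suc by (simp add: c'_def)
qed

lemma fire_root_times:
  assumes "0 < k" "finite R" "k * t \<le> card R"
  shows "\<exists>c. (fire_step k)\<^sup>*\<^sup>* (at_root R) c \<and> card (c []) = card R - k * t \<and>
    (\<forall>j w. (j < k \<longrightarrow> w \<noteq> []) \<longrightarrow> c (j # w) = {})"
  using assms(3)
proof (induction t)
  case 0
  show ?case
    by (intro exI[of _ "at_root R"]) simp
next
  case (Suc t)
  then obtain c where steps: "(fire_step k)\<^sup>*\<^sup>* (at_root R) c" and root: "card (c []) = card R - k * t"
    and deeper: "\<forall>j w. (j < k \<longrightarrow> w \<noteq> []) \<longrightarrow> c (j # w) = {}"
    by auto
  have "labels c = R"
    using labels_fire_steps[OF assms(1) steps] by simp
  then have "c [] \<subseteq> R"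
    unfolding labels_def by blast
  then have fin: "finite (c [])"
    using assms(2) by (rule finite_subset)
  have "k \<le> card (c [])"
    using Suc.prems root by simp
  then obtain A where A: "A \<subseteq> c []" "card A = k"
    by (meson obtain_subset_with_card_n)
  have "fire_step k c (fire k [] A c)"
    unfolding fire_step_iff using A by blast
  then have "(fire_step k)\<^sup>*\<^sup>* (at_root R) (fire k [] A c)"
    using steps by simp
  moreover have "card (fire k [] A c []) = card R - k * Suc t"
    using root card_Diff_subset[OF finite_subset[OF A(1) fin] A(1)] A(2)
    unfolding fire_self by simp
  moreover have "fire k [] A c (j # w) = {}" if "j < k \<longrightarrow> w \<noteq> []" for j w
    using that deeper unfolding fire_def by auto
  ultimately show ?case
    by blast
qed

lemma fire_root_until_empty:
  assumes "0 < k" "finite R" "card R = k * q"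
  obtains c where "(fire_step k)\<^sup>*\<^sup>* (at_root R) c" "c [] = {}"
    "\<And>j. j < k \<Longrightarrow> subtree j c = at_root (c [j]) \<and> card (c [j]) = q"
    "\<And>j w. k \<le> j \<Longrightarrow> c (j # w) = {}"
proof -
  obtain c where steps: "(fire_step k)\<^sup>*\<^sup>* (at_root R) c" and root: "card (c []) = 0"
    and deeper: "\<forall>j w. (j < k \<longrightarrow> w \<noteq> []) \<longrightarrow> c (j # w) = {}"
    using fire_root_times[OF assms(1,2), of q] assms(3) by auto
  obtain f where inv: "root_fired k R f c"
    using fire_steps_root_fired[OF assms(1,2) steps] by blast
  then have "f = q"
    using root assms(1,3) unfolding root_fired_def by simp
  have sub: "subtree j c = at_root (c [j])" if "j < k" for j
    using deeper that unfolding subtree_def at_root_def by (auto simp: fun_eq_iff)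
  moreover have "card (c [j]) = q" if "j < k" for j
  proof -
    have "card (labels (subtree j c)) = f"
      using inv that unfolding root_fired_def from_root_def by blast
    then show ?thesis
      using sub[OF that] \<open>f = q\<close> by simp
  qed
  moreover have "c [] = {}"
  proof -
    have "labels c = R"
      using labels_fire_steps[OF assms(1) steps] by simp
    then have "c [] \<subseteq> R"
      unfolding labels_def by blast
    then have "finite (c [])"
      using assms(2) by (rule finite_subset)
    then show ?thesis
      using root by simp
  qed
  ultimately show thesis
    using that steps deeper by simp
qed

lemma exists_stable_fire_steps:
  assumes "2 \<le> k" "finite R" "card R = k ^ l"
  shows "\<exists>c. (fire_step k)\<^sup>*\<^sup>* (at_root R) c \<and> stable k c"
  using assms(2,3)
proof (induction l arbitrary: R)
  case 0
  then show ?case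
    using assms(1) by (intro exI[of _ "at_root R"]) (auto simp: stable_def at_root_def)
next
  case (Suc m)
  have "0 < k" "card R = k * k ^ m"
    using assms(1) Suc.prems(2) by simp_all
  then obtain c where steps: "(fire_step k)\<^sup>*\<^sup>* (at_root R) c" and root: "c [] = {}"
    and children: "\<And>j. j < k \<Longrightarrow> subtree j c = at_root (c [j]) \<and> card (c [j]) = k ^ m"
    and deeper: "\<And>j w. k \<le> j \<Longrightarrow> c (j # w) = {}"
    using fire_root_until_empty[OF _ Suc.prems(1)] by blast
  have "\<exists>d. (fire_step k)\<^sup>*\<^sup>* (subtree j c) d \<and> stable k d" if "j < k" for j
  proof -
    have "finite (c [j])"
      using children[OF that] \<open>0 < k\<close> by (intro card_ge_0_finite) simp
    then show ?thesis
      using Suc.IH children[OF that] by simp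
  qed
  then obtain d where d: "\<And>j. j < k \<Longrightarrow> (fire_step k)\<^sup>*\<^sup>* (subtree j c) (d j) \<and> stable k (d j)"
    by metis
  let ?c' = "\<lambda>w. case w of [] \<Rightarrow> c [] | i # u \<Rightarrow> if i < k then d i u else c w"
  have "(fire_step k)\<^sup>*\<^sup>* c ?c'"
    using fire_steps_subtrees d by blast
  moreover have "stable k ?c'"
    using d root deeper \<open>0 < k\<close> unfolding stable_def by (auto split: list.splits)
  ultimately show ?case
    using steps by (meson rtranclp_trans)
qed

lemma exists_reachable_stable: "2 \<le> k \<Longrightarrow> \<exists>c. reachable k l c \<and> stable k c"
  unfolding reachable_def init_config_eq_at_root by (rule exists_stable_fire_steps) simp_all

section \<open>The recursive bound\<close>

lemma length_layer_words: "length (layer_words k l) = k ^ l"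
  by (induction l) (simp_all add: length_concat o_def sum_list_triv)

lemma config_perm_Suc:
  "config_perm k (Suc m) c = concat (map (\<lambda>j. config_perm k m (subtree j c)) [0..<k])"
  unfolding config_perm_def subtree_def by (simp add: map_concat o_def)

lemma config_perm_relabel:
  assumes "\<forall>w \<in> set (layer_words k l). card (c w) = 1"
  shows "config_perm k l (relabel g c) = map g (config_perm k l c)"
  unfolding config_perm_def relabel_def using assms by (auto simp: card_Suc_eq)

lemma set_config_perm:
  assumes "\<forall>w \<in> set (layer_words k l). card (c w) = 1"
  shows "set (config_perm k l c) \<subseteq> labels c"
proof
  fix x
  assume "x \<in> set (config_perm k l c)"
  then obtain w where "w \<in> set (layer_words k l)" "x = the_elem (c w)"
    unfolding config_perm_def by auto
  with assms have "x \<in> c w"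
    by (auto simp: card_Suc_eq)
  then show "x \<in> labels c"
    unfolding labels_def by blast
qed

lemma finite_D_set: "finite {longest_decr (config_perm k l c) | c. reachable k l c \<and> stable k c}"
proof (rule finite_subset)
  show "{longest_decr (config_perm k l c) | c. reachable k l c \<and> stable k c} \<subseteq> {..k ^ l}"
    using longest_decr_le_length
    by (auto simp: config_perm_def) (metis length_layer_words length_map)
qed simp

lemma longest_decr_le_D:
  "reachable k l c \<Longrightarrow> stable k c \<Longrightarrow> longest_decr (config_perm k l c) \<le> D k l"
  unfolding D_def by (rule Max_ge[OF finite_D_set]) blast

lemma longest_decr_subtree_le_D:
  assumes "2 \<le> k" "reachable k (Suc m) c" "stable k c" "j < k"
  shows "longest_decr (config_perm k m (subtree j c)) \<le> D k m"
proof -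
  define g where "g = rank (labels (subtree j c))"
  have mono: "strict_mono_on (labels (subtree j c)) g"
    unfolding g_def using strict_mono_on_rank_subtree[OF _ assms(2)] assms(1) by simp
  have "card (subtree j c w) = 1" if "w \<in> set (layer_words k m)" for w
  proof -
    have "j # w \<in> set (layer_words k (Suc m))"
      using that assms(4) by auto
    then show ?thesis
      using reachable_stable_card_layer[OF assms(1-3)] by (simp add: subtree_def)
  qed
  then have singletons: "\<forall>w \<in> set (layer_words k m). card (subtree j c w) = 1"
    by blast
  have "longest_decr (config_perm k m (subtree j c))
      \<le> longest_decr (map g (config_perm k m (subtree j c)))"
    by (rule longest_decr_le_map, rule monotone_on_subset[OF mono set_config_perm[OF singletons]])
  also have "\<dots> = longest_decr (config_perm k m (relabel g (subtree j c)))"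
    using config_perm_relabel[OF singletons] by simp
  also have "\<dots> \<le> D k m"
  proof (rule longest_decr_le_D)
    show "reachable k m (relabel g (subtree j c))"
      unfolding g_def using reachable_relabel_subtree assms by simp
    show "stable k (relabel g (subtree j c))"
      using assms(3) unfolding stable_def card_relabel[OF mono] by (simp add: subtree_def)
  qed
  finally show ?thesis .
qed

lemma longest_decr_config_perm_Suc_le:
  assumes "2 \<le> k" "reachable k (Suc m) c" "stable k c"
  shows "longest_decr (config_perm k (Suc m) c) \<le> k * D k m"
proof -
  have "longest_decr (config_perm k (Suc m) c)
      \<le> (\<Sum>j\<leftarrow>[0..<k]. longest_decr (config_perm k m (subtree j c)))"
    unfolding config_perm_Suc
    using longest_decr_concat[of "map (\<lambda>j. config_perm k m (subtree j c)) [0..<k]"]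
    by (simp add: o_def)
  also have "\<dots> \<le> (\<Sum>j\<leftarrow>[0..<k]. D k m)"
    by (rule sum_list_mono) (use longest_decr_subtree_le_D assms in simp)
  also have "\<dots> = k * D k m"
    by (simp add: sum_list_triv)
  finally show ?thesis .
qed

lemma D_Suc_le: "2 \<le> k \<Longrightarrow> D k (Suc m) \<le> k * D k m"
  unfolding D_def[of k "Suc m"]
  using exists_reachable_stable longest_decr_config_perm_Suc_le
  by (subst Max_le_iff[OF finite_D_set]) auto

theorem proposition8p2:
  fixes k l n :: nat
  assumes "k \<ge> 2" and "1 \<le> n" and "n \<le> l"
  shows "D k l \<le> D k n * k ^ (l - n)"
proof -
  have "D k (n + d) \<le> D k n * k ^ d" for d
  proof (induction d)
    case (Suc d)
    have "D k (n + Suc d) \<le> k * D k (n + d)"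
      using D_Suc_le[OF assms(1)] by simp
    also have "\<dots> \<le> k * (D k n * k ^ d)"
      using Suc.IH by simp
    finally show ?case
      by (simp add: algebra_simps)
  qed simp
  from this[of "l - n"] show ?thesis
    using assms(3) by simp
qed

end
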